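(* Suppose there are at least three states ($n\ge3$). If an updating rule respects the Blackwell order for a prior $\mu$ in the relative interior of $\Delta$ and its distortion function $\varphi=\varphi^{\mu}$ produces a contractive error but does not produce an expansive error, then $\varphi$ is occasionally stubborn.
   Context: Let $\Theta$ be a finite set of states, $|\Theta|=n$, and $\Delta=\Delta(\Theta)$ the simplex of beliefs, viewed in $\mathbb{R}^{n-1}$. An experiment $\pi:\Theta\to\Delta(S)$ ($S$ finite) with prior $\mu$ induces the Bayesian distribution over posteriors $\rho_B$, a finitely supported distribution on $\Delta$ with mean $\mu$ (every such distribution arises from some experiment). Blackwell order: $\pi\succeq\pi'$ iff $\rho_B'$ is a mean-preserving contraction of $\rho_B$. An updating rule is given, for each prior $\mu$, by a distortion function $\varphi^{\mu}:\Delta\to\Delta$: when the Bayesian posterior is $x$, the decision maker holds belief $\varphi^{\mu}(x)$. For a compact action set $A$, continuous $u:A\times\Theta\to\mathbb{R}$, and consistent choice $a^*:\Delta\to A$ (i.e. $a^*(y)\in\arg\max_{a}\mathbb{E}_y u(a,\theta)$ for all $y$), let $W(x)=\mathbb{E}_x u(a^*(\varphi^{\mu}(x)),\theta)$. The rule respects the Blackwell order for $\mu$ if for all such $A,u,a^*$ and all $\pi\succeq\pi'$, $\mathbb{E}_{\rho_B}W\ge\mathbb{E}_{\rho_B'}W$. For $x,y\in\Delta$, $\ell(x,y)$ is the closed segment between them and $\ell^{\circ}(x,y)=\ell(x,y)\setminus\{x,y\}$. $\varphi$ has an expansive error at $x$ if $\varphi(x)\notin\ell(x,\mu)$, and a contractive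 error at $x$ if $\varphi(x)\in\ell(x,\mu)$ and $\varphi(x)\ne x$; $\varphi$ produces an expansive (contractive) error if it has one at some $x$. Faces of $\Delta$ include vertices, edges, and $\Delta$ itself. Let $\hat{\mathcal E}$ be the set of vertices $e$ with $\varphi(e)\neq e$, and $\hat{\mathcal S}$ the set of faces containing some $x$ with $\varphi(x)\ne x$; $\hat{\mathcal S}_m$ denotes its $m$-dimensional members. $\varphi$ is occasionally stubborn if either $\varphi(x)=x$ for all $x$, or there is a single $x^*\in\Delta$ such that: (i) for every $S\in\hat{\mathcal S}$ of dimension $\ge2$, $\varphi(x)=x^*$ for all $x$ in the relative interior of $S$; (ii) for every edge $S\in\hat{\mathcal S}_1$, $\varphi(x)=x^*$ for all $x$ in the relative interior of $S$, except that if $x^*$ lies in the relative interior of an edge $S_1'\in\hat{\mathcal S}_1$, then $S_1'$ may instead satisfy: there is a vertex $e'$ of $S_1'$ with $\varphi(x)=x^*$ for all $x\in\ell^{\circ}(e',x^* )$ and $\varphi(x)=x$ for all $x\in S_1'\setminus\ell^{\circ}(e',x^* )$; (iii) $\varphi(e)\in\ell(x^*,e)$ for every $e\in\hat{\mathcal E}$. *)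

theory Defs
  imports "HOL-Analysis.Analysis" "HOL-Probability.Probability"
begin

definition belief_simplex :: "(real ^ 'n::finite) set" where
  "belief_simplex = {x. (\<forall>i. 0 \<le> x $ i) \<and> (\<Sum>i\<in>UNIV. x $ i) = 1}"

definition prior_pmf :: "real ^ 'n::finite \<Rightarrow> 'n pmf" where
  "prior_pmf \<mu> = embed_pmf (\<lambda>\<theta>. \<mu> $ \<theta>)"

definition is_experiment :: "('n::finite \<Rightarrow> nat pmf) \<Rightarrow> bool" where
  "is_experiment \<pi> \<longleftrightarrow> finite (\<Union>\<theta>. set_pmf (\<pi> \<theta>))"

definition bayes_dist :: "real ^ 'n::finite \<Rightarrow> ('n \<Rightarrow> nat pmf) \<Rightarrow> (real ^ 'n) pmf" where
  "bayes_dist \<mu> \<pi> =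
     map_pmf (\<lambda>s. \<chi> \<theta>. \<mu> $ \<theta> * pmf (\<pi> \<theta>) s / (\<Sum>\<theta>'\<in>UNIV. \<mu> $ \<theta>' * pmf (\<pi> \<theta>') s))
             (bind_pmf (prior_pmf \<mu>) \<pi>)"

definition mean_pmf :: "(real ^ 'n::finite) pmf \<Rightarrow> real ^ 'n" where
  "mean_pmf p = measure_pmf.expectation p (\<lambda>x. x)"

definition mpc :: "(real ^ 'n::finite) pmf \<Rightarrow> (real ^ 'n) pmf \<Rightarrow> bool" where
  "mpc \<rho>' \<rho> \<longleftrightarrow> (\<exists>K. \<rho> = bind_pmf \<rho>' K \<and> (\<forall>y\<in>set_pmf \<rho>'. mean_pmf (K y) = y))"

definition blackwell_ge :: "real ^ 'n::finite \<Rightarrow> ('n \<Rightarrow> nat pmf) \<Rightarrow> ('n \<Rightarrow> nat pmf) \<Rightarrow> bool" where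
  "blackwell_ge \<mu> \<pi> \<pi>' \<longleftrightarrow> mpc (bayes_dist \<mu> \<pi>') (bayes_dist \<mu> \<pi>)"

definition exp_util :: "real ^ 'n::finite \<Rightarrow> ('a \<Rightarrow> 'n \<Rightarrow> real) \<Rightarrow> 'a \<Rightarrow> real" where
  "exp_util y u a = (\<Sum>\<theta>\<in>UNIV. y $ \<theta> * u a \<theta>)"

definition consistent_choice ::
  "'a set \<Rightarrow> ('a \<Rightarrow> 'n::finite \<Rightarrow> real) \<Rightarrow> (real ^ 'n \<Rightarrow> 'a) \<Rightarrow> bool" where
  "consistent_choice A u astar \<longleftrightarrow>
     (\<forall>y\<in>belief_simplex. astar y \<in> A \<and> (\<forall>a\<in>A. exp_util y u a \<le> exp_util y u (astar y)))"

definition respects_blackwell :: "real ^ 'n::finite \<Rightarrow> (real ^ 'n \<Rightarrow> real ^ 'n) \<Rightarrow> bool" where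
  "respects_blackwell \<mu> \<phi> \<longleftrightarrow>
     (\<forall>(A :: (real ^ 'n) set) u astar.
        compact A \<and> A \<noteq> {} \<and> (\<forall>\<theta>. continuous_on A (\<lambda>a. u a \<theta>)) \<and>
        consistent_choice A u astar \<longrightarrow>
        (\<forall>\<pi> \<pi>'. is_experiment \<pi> \<and> is_experiment \<pi>' \<and> blackwell_ge \<mu> \<pi> \<pi>' \<longrightarrow>
           measure_pmf.expectation (bayes_dist \<mu> \<pi>') (\<lambda>x. exp_util x u (astar (\<phi> x)))
           \<le> measure_pmf.expectation (bayes_dist \<mu> \<pi>) (\<lambda>x. exp_util x u (astar (\<phi> x)))))"

definition expansive_error_at :: "real ^ 'n::finite \<Rightarrow> (real ^ 'n \<Rightarrow> real ^ 'n) \<Rightarrow> real ^ 'n \<Rightarrow> bool" where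
  "expansive_error_at \<mu> \<phi> x \<longleftrightarrow> \<phi> x \<notin> closed_segment x \<mu>"

definition contractive_error_at :: "real ^ 'n::finite \<Rightarrow> (real ^ 'n \<Rightarrow> real ^ 'n) \<Rightarrow> real ^ 'n \<Rightarrow> bool" where
  "contractive_error_at \<mu> \<phi> x \<longleftrightarrow> \<phi> x \<in> closed_segment x \<mu> \<and> \<phi> x \<noteq> x"

definition produces_expansive_error :: "real ^ 'n::finite \<Rightarrow> (real ^ 'n \<Rightarrow> real ^ 'n) \<Rightarrow> bool" where
  "produces_expansive_error \<mu> \<phi> \<longleftrightarrow> (\<exists>x\<in>belief_simplex. expansive_error_at \<mu> \<phi> x)"

definition produces_contractive_error :: "real ^ 'n::finite \<Rightarrow> (real ^ 'n \<Rightarrow> real ^ 'n) \<Rightarrow> bool" where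
  "produces_contractive_error \<mu> \<phi> \<longleftrightarrow> (\<exists>x\<in>belief_simplex. contractive_error_at \<mu> \<phi> x)"

definition S_hat :: "(real ^ 'n::finite \<Rightarrow> real ^ 'n) \<Rightarrow> (real ^ 'n) set set" where
  "S_hat \<phi> = {S. S face_of belief_simplex \<and> S \<noteq> {} \<and> (\<exists>x\<in>S. \<phi> x \<noteq> x)}"

definition E_hat :: "(real ^ 'n::finite \<Rightarrow> real ^ 'n) \<Rightarrow> (real ^ 'n) set" where
  "E_hat \<phi> = {e. e extreme_point_of belief_simplex \<and> \<phi> e \<noteq> e}"

definition occasionally_stubborn :: "(real ^ 'n::finite \<Rightarrow> real ^ 'n) \<Rightarrow> bool" where
  "occasionally_stubborn \<phi> \<longleftrightarrow>
     (\<forall>x\<in>belief_simplex. \<phi> x = x) \<or>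
     (\<exists>xs\<in>belief_simplex.
        (\<forall>S\<in>S_hat \<phi>. aff_dim S \<ge> 2 \<longrightarrow> (\<forall>x\<in>rel_interior S. \<phi> x = xs)) \<and>
        (\<forall>S\<in>S_hat \<phi>. aff_dim S = 1 \<longrightarrow>
           (\<forall>x\<in>rel_interior S. \<phi> x = xs) \<or>
           (xs \<in> rel_interior S \<and>
            (\<exists>e'. e' extreme_point_of S \<and>
                  (\<forall>x\<in>open_segment e' xs. \<phi> x = xs) \<and>
                  (\<forall>x\<in>S - open_segment e' xs. \<phi> x = x)))) \<and>
        (\<forall>e\<in>E_hat \<phi>. \<phi> e \<in> closed_segment xs e))"

end

theory Submission
  imports Defs
begin

text \<open>Without expansive errors, \<open>\<phi> x\<close> lies on the segment from \<open>x\<close> to the prior \<open>\<mu>\<close>.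
  Every finitely supported distribution of posteriors in the simplex with mean \<open>\<mu>\<close> comes from an
  experiment, and splitting one posterior of such a distribution into two is a mean-preserving spread;
  so respecting the Blackwell order makes \<open>x \<mapsto> E\<^sub>x u(a\<^sup>*(\<phi> x))\<close> convex on the simplex for
  every decision problem. Apply this to the bet paying \<open>c \<bullet> \<theta>\<close>, taken exactly when it is
  favourable. If \<open>\<phi>\<close> moves \<open>x\<^sub>0\<close> and \<open>y\<close> lies in the relative interior of a face through \<open>x\<^sub>0\<close>,
  with \<open>\<mu>, x\<^sub>0, y\<close> not collinear and \<open>\<phi> y \<noteq> \<mu>\<close>, some \<open>c\<close> makes the bet favourable at \<open>x\<^sub>0\<close>, \<open>y\<close>
  and \<open>\<phi> y\<close> but not at \<open>\<phi> x\<^sub>0\<close>; writing \<open>y\<close> as a proper convex combination of \<open>x\<^sub>0\<close> and a point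
  of the face beyond \<open>y\<close> then contradicts convexity. With at least three states, every face of
  positive dimension containing a point moved by \<open>\<phi>\<close> has such non-collinear relative interior
  points, so \<open>\<phi>\<close> sends its whole relative interior to \<open>\<mu>\<close>: \<open>\<phi>\<close> is occasionally stubborn
  with \<open>x\<^sup>* = \<mu>\<close>.\<close>

lemma convex_belief_simplex: "convex (belief_simplex :: (real ^ 'n::finite) set)"
  unfolding belief_simplex_def
  by (rule convexI) (auto simp: sum.distrib sum_distrib_left[symmetric])

lemma axis_in_belief_simplex: "axis i 1 \<in> (belief_simplex :: (real ^ 'n::finite) set)"
  unfolding belief_simplex_def axis_def by simp

lemma inner_one_belief_simplex: "x \<in> belief_simplex \<Longrightarrow> 1 \<bullet> x = 1"
  unfolding belief_simplex_def inner_vec_def by simp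

lemma rel_interior_belief_simplex_pos:
  fixes \<mu> :: "real ^ 'n::finite"
  assumes "\<mu> \<in> rel_interior belief_simplex"
  shows "0 < \<mu> $ i"
proof -
  let ?F = "belief_simplex \<inter> {x. (- axis i 1) \<bullet> x = 0}"
  have "?F face_of belief_simplex"
    by (rule face_of_Int_supporting_hyperplane_le)
       (use convex_belief_simplex in \<open>auto simp: belief_simplex_def inner_axis'\<close>)
  moreover have "?F \<noteq> belief_simplex"
  proof
    assume "?F = belief_simplex"
    then have "(- axis i 1) \<bullet> (axis i 1 :: real ^ 'n) = 0"
      using axis_in_belief_simplex[of i] by blast
    then show False by (simp add: inner_axis')
  qed
  ultimately have "\<mu> \<notin> ?F"
    using face_of_disjoint_rel_interior assms by blast
  moreover have "\<mu> \<in> belief_simplex"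
    using assms rel_interior_subset by blast
  ultimately show ?thesis
    by (auto simp: inner_axis' belief_simplex_def order_le_less)
qed

lemma pmf_prior_pmf:
  assumes "\<mu> \<in> belief_simplex"
  shows "pmf (prior_pmf \<mu>) \<theta> = \<mu> $ \<theta>"
proof -
  have "(\<integral>\<^sup>+t. ennreal (\<mu> $ t) \<partial>count_space UNIV) = (\<Sum>t\<in>UNIV. ennreal (\<mu> $ t))"
    by (rule nn_integral_count_space_finite) simp
  also have "\<dots> = 1"
    using assms by (simp add: belief_simplex_def)
  finally show ?thesis
    unfolding prior_pmf_def using assms by (subst pmf_embed_pmf) (auto simp: belief_simplex_def)
qed

lemma expectation_finite_pmf:
  fixes f :: "'a \<Rightarrow> 'b::{banach, second_countable_topology}"
  assumes "finite (set_pmf P)"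
  shows "measure_pmf.expectation P f = (\<Sum>s\<in>set_pmf P. pmf P s *\<^sub>R f s)"
  using assms by (intro integral_measure_pmf) auto

text \<open>Bayes' rule read backwards: for \<open>q s\<close> to be the posterior after signal \<open>s\<close>, which arrives
  with probability \<open>pmf P s\<close>, the signal must have likelihood \<open>pmf P s * q s $ \<theta> / \<mu> $ \<theta>\<close> in
  state \<open>\<theta>\<close>.\<close>
definition posterior_experiment ::
  "real ^ 'n::finite \<Rightarrow> nat pmf \<Rightarrow> (nat \<Rightarrow> real ^ 'n) \<Rightarrow> 'n \<Rightarrow> nat pmf" where
  "posterior_experiment \<mu> P q \<theta> = embed_pmf (\<lambda>s. pmf P s * q s $ \<theta> / \<mu> $ \<theta>)"

lemma pmf_posterior_experiment:
  assumes \<mu>: "\<mu> \<in> rel_interior belief_simplex" and fin: "finite (set_pmf P)"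
    and q: "\<forall>s\<in>set_pmf P. q s \<in> belief_simplex" and mean: "measure_pmf.expectation P q = \<mu>"
  shows "pmf (posterior_experiment \<mu> P q \<theta>) s = pmf P s * q s $ \<theta> / \<mu> $ \<theta>"
proof -
  have pos: "0 < \<mu> $ \<theta>"
    using \<mu> by (rule rel_interior_belief_simplex_pos)
  have nonneg: "0 \<le> pmf P s * q s $ \<theta> / \<mu> $ \<theta>" for s
    using q pos by (cases "s \<in> set_pmf P") (auto simp: belief_simplex_def set_pmf_iff)
  have "(\<integral>\<^sup>+s. ennreal (pmf P s * q s $ \<theta> / \<mu> $ \<theta>) \<partial>count_space UNIV)
      = ennreal (\<Sum>s\<in>set_pmf P. pmf P s * q s $ \<theta> / \<mu> $ \<theta>)"
    using fin nonneg by (subst nn_integral_count_space') (auto simp: set_pmf_iff)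
  also have "(\<Sum>s\<in>set_pmf P. pmf P s * q s $ \<theta> / \<mu> $ \<theta>) = (measure_pmf.expectation P q) $ \<theta> / \<mu> $ \<theta>"
    using fin by (simp add: expectation_finite_pmf sum_divide_distrib)
  also have "\<dots> = 1"
    using mean pos by simp
  finally show ?thesis
    unfolding posterior_experiment_def using nonneg by (simp add: pmf_embed_pmf)
qed

lemma bayes_dist_posterior_experiment:
  assumes \<mu>: "\<mu> \<in> rel_interior belief_simplex" and fin: "finite (set_pmf P)"
    and q: "\<forall>s\<in>set_pmf P. q s \<in> belief_simplex" and mean: "measure_pmf.expectation P q = \<mu>"
  shows "is_experiment (posterior_experiment \<mu> P q)"
    and "bayes_dist \<mu> (posterior_experiment \<mu> P q) = map_pmf q P"
proof -
  note pmf_exp = pmf_posterior_experiment[OF assms]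
  have pos: "0 < \<mu> $ \<theta>" for \<theta>
    using \<mu> by (rule rel_interior_belief_simplex_pos)
  have \<mu>_simplex: "\<mu> \<in> belief_simplex"
    using \<mu> rel_interior_subset by blast
  have likelihood_sum: "(\<Sum>\<theta>\<in>UNIV. \<mu> $ \<theta> * pmf (posterior_experiment \<mu> P q \<theta>) s) = pmf P s" for s
  proof (cases "s \<in> set_pmf P")
    case True
    then show ?thesis
      using q pos by (simp add: pmf_exp belief_simplex_def less_imp_neq[symmetric] flip: sum_distrib_left)
  qed (simp add: pmf_exp set_pmf_iff)
  show "is_experiment (posterior_experiment \<mu> P q)"
    unfolding is_experiment_def
    by (rule finite_subset[OF _ fin]) (auto simp: set_pmf_iff pmf_exp)
  have signals: "bind_pmf (prior_pmf \<mu>) (posterior_experiment \<mu> P q) = P"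
  proof (rule pmf_eqI)
    fix s
    have "pmf (bind_pmf (prior_pmf \<mu>) (posterior_experiment \<mu> P q)) s
        = (\<Sum>\<theta>\<in>UNIV. pmf (prior_pmf \<mu>) \<theta> * pmf (posterior_experiment \<mu> P q \<theta>) s)"
      unfolding pmf_bind by (subst integral_measure_pmf[of UNIV]) auto
    then show "pmf (bind_pmf (prior_pmf \<mu>) (posterior_experiment \<mu> P q)) s = pmf P s"
      by (simp add: pmf_prior_pmf[OF \<mu>_simplex] likelihood_sum)
  qed
  show "bayes_dist \<mu> (posterior_experiment \<mu> P q) = map_pmf q P"
    unfolding bayes_dist_def signals
  proof (rule map_pmf_cong[OF refl])
    fix s assume "s \<in> set_pmf P"
    then show "(\<chi> \<theta>. \<mu> $ \<theta> * pmf (posterior_experiment \<mu> P q \<theta>) s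
                  / (\<Sum>\<theta>'\<in>UNIV. \<mu> $ \<theta>' * pmf (posterior_experiment \<mu> P q \<theta>') s)) = q s"
      unfolding likelihood_sum using pos by (simp add: pmf_exp vec_eq_iff set_pmf_iff less_imp_neq[symmetric])
  qed
qed

lemma ex_experiment_bayes_dist:
  fixes \<rho> :: "(real ^ 'n::finite) pmf"
  assumes \<mu>: "\<mu> \<in> rel_interior belief_simplex" and fin: "finite (set_pmf \<rho>)"
    and \<rho>: "set_pmf \<rho> \<subseteq> belief_simplex" and mean: "mean_pmf \<rho> = \<mu>"
  obtains \<pi> where "is_experiment \<pi>" "bayes_dist \<mu> \<pi> = \<rho>"
proof -
  obtain f :: "real ^ 'n \<Rightarrow> nat" where f: "inj_on f (set_pmf \<rho>)"
    using finite_imp_inj_to_nat_seg[OF fin] by blast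
  define q where "q = the_inv_into (set_pmf \<rho>) f"
  have q_f: "map_pmf q (map_pmf f \<rho>) = \<rho>"
    unfolding map_pmf_comp q_def using f by (simp add: map_pmf_idI the_inv_into_f_f)
  have "measure_pmf.expectation (map_pmf f \<rho>) q = \<mu>"
    using mean unfolding mean_pmf_def by (subst (asm) q_f[symmetric]) simp
  moreover have "\<forall>s\<in>set_pmf (map_pmf f \<rho>). q s \<in> belief_simplex"
    using \<rho> f by (auto simp: q_def the_inv_into_f_f)
  ultimately show ?thesis
    using that bayes_dist_posterior_experiment[OF \<mu>, of "map_pmf f \<rho>" q] fin q_f by simp
qed

lemma expectation_bernoulli_pmf:
  fixes f :: "bool \<Rightarrow> 'b::{banach, second_countable_topology}"
  assumes "0 \<le> p" "p \<le> 1"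
  shows "measure_pmf.expectation (bernoulli_pmf p) f = p *\<^sub>R f True + (1 - p) *\<^sub>R f False"
  using assms by (subst integral_measure_pmf[of UNIV]) (auto simp: UNIV_bool)

lemma mean_pmf_bind_pmf:
  assumes fin: "finite (set_pmf \<rho>)"
    and K: "\<forall>v\<in>set_pmf \<rho>. finite (set_pmf (K v)) \<and> mean_pmf (K v) = v"
  shows "mean_pmf (bind_pmf \<rho> K) = mean_pmf \<rho>"
proof -
  have "mean_pmf (bind_pmf \<rho> K) = (\<Sum>v\<in>set_pmf \<rho>. pmf \<rho> v *\<^sub>R mean_pmf (K v))"
    unfolding mean_pmf_def using fin K by (intro pmf_expectation_bind) auto
  also have "\<dots> = (\<Sum>v\<in>set_pmf \<rho>. pmf \<rho> v *\<^sub>R v)"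
    using K by (intro sum.cong) auto
  also have "\<dots> = mean_pmf \<rho>"
    unfolding mean_pmf_def using fin by (simp add: expectation_finite_pmf)
  finally show ?thesis .
qed

definition decision_problem ::
  "'a::topological_space set \<Rightarrow> ('a \<Rightarrow> 'n::finite \<Rightarrow> real) \<Rightarrow> (real ^ 'n \<Rightarrow> 'a) \<Rightarrow> bool" where
  "decision_problem A u astar \<longleftrightarrow>
     compact A \<and> A \<noteq> {} \<and> (\<forall>\<theta>. continuous_on A (\<lambda>a. u a \<theta>)) \<and> consistent_choice A u astar"

definition distorted_value ::
  "(real ^ 'n::finite \<Rightarrow> real ^ 'n) \<Rightarrow> ('a \<Rightarrow> 'n \<Rightarrow> real) \<Rightarrow> (real ^ 'n \<Rightarrow> 'a) \<Rightarrow> real ^ 'n \<Rightarrow> real" where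
  "distorted_value \<phi> u astar x = exp_util x u (astar (\<phi> x))"

lemma respects_blackwell_mpc:
  fixes \<mu> :: "real ^ 'n::finite" and A :: "(real ^ 'n) set"
  assumes \<mu>: "\<mu> \<in> rel_interior belief_simplex" and RB: "respects_blackwell \<mu> \<phi>"
    and DP: "decision_problem A u astar"
    and \<rho>': "finite (set_pmf \<rho>')" "set_pmf \<rho>' \<subseteq> belief_simplex" "mean_pmf \<rho>' = \<mu>"
    and \<rho>: "finite (set_pmf \<rho>)" "set_pmf \<rho> \<subseteq> belief_simplex"
    and mpc: "mpc \<rho>' \<rho>"
  shows "measure_pmf.expectation \<rho>' (distorted_value \<phi> u astar)
           \<le> measure_pmf.expectation \<rho> (distorted_value \<phi> u astar)"
proof -
  obtain K where K: "\<rho> = bind_pmf \<rho>' K" "\<forall>v\<in>set_pmf \<rho>'. mean_pmf (K v) = v"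
    using mpc unfolding mpc_def by blast
  have "finite (set_pmf (K v))" if "v \<in> set_pmf \<rho>'" for v
    using \<rho>(1) that unfolding K(1) by (auto simp: set_bind_pmf intro: finite_subset)
  then have "mean_pmf \<rho> = \<mu>"
    using \<rho>'(1,3) K by (simp add: mean_pmf_bind_pmf)
  then obtain \<pi> where \<pi>: "is_experiment \<pi>" "bayes_dist \<mu> \<pi> = \<rho>"
    using ex_experiment_bayes_dist[OF \<mu> \<rho>] by blast
  obtain \<pi>' where \<pi>': "is_experiment \<pi>'" "bayes_dist \<mu> \<pi>' = \<rho>'"
    using ex_experiment_bayes_dist[OF \<mu> \<rho>'] by blast
  have "blackwell_ge \<mu> \<pi> \<pi>'"
    unfolding blackwell_ge_def \<pi>(2) \<pi>'(2) by (rule mpc)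
  then show ?thesis
    using RB[unfolded respects_blackwell_def, rule_format, of A u astar \<pi> \<pi>'] DP \<pi>(1) \<pi>'(1)
    unfolding decision_problem_def distorted_value_def \<pi>(2) \<pi>'(2) by blast
qed

lemma distorted_value_split:
  fixes \<mu> :: "real ^ 'n::finite" and A :: "(real ^ 'n) set"
  assumes \<mu>: "\<mu> \<in> rel_interior belief_simplex" and RB: "respects_blackwell \<mu> \<phi>"
    and DP: "decision_problem A u astar"
    and \<rho>': "finite (set_pmf \<rho>')" "set_pmf \<rho>' \<subseteq> belief_simplex" "mean_pmf \<rho>' = \<mu>"
    and x: "x \<in> set_pmf \<rho>'" and yz: "y \<in> belief_simplex" "z \<in> belief_simplex"
    and t: "0 \<le> t" "t \<le> 1" and x_eq: "x = (1 - t) *\<^sub>R y + t *\<^sub>R z"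
  shows "distorted_value \<phi> u astar x
           \<le> (1 - t) * distorted_value \<phi> u astar y + t * distorted_value \<phi> u astar z"
proof -
  define W where "W = distorted_value \<phi> u astar"
  define split where "split = map_pmf (\<lambda>b. if b then z else y) (bernoulli_pmf t)"
  define K where "K v = (if v = x then split else return_pmf v)" for v
  define \<rho> where "\<rho> = bind_pmf \<rho>' K"
  have mean_K: "mean_pmf (K v) = v" for v
    using t x_eq by (simp add: K_def split_def mean_pmf_def expectation_bernoulli_pmf)
  have K_simplex: "set_pmf (K v) \<subseteq> belief_simplex" if "v \<in> set_pmf \<rho>'" for v
    using that yz \<rho>'(2) by (auto simp: K_def split_def)
  have K_fin: "finite (set_pmf (K v))" for v
    by (simp add: K_def split_def)
  have "finite (set_pmf \<rho>)" "set_pmf \<rho> \<subseteq> belief_simplex"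
    using \<rho>'(1) K_fin K_simplex by (auto simp: \<rho>_def set_bind_pmf)
  moreover have "mpc \<rho>' \<rho>"
    unfolding mpc_def \<rho>_def using mean_K by blast
  ultimately have "measure_pmf.expectation \<rho>' W \<le> measure_pmf.expectation \<rho> W"
    unfolding W_def by (rule respects_blackwell_mpc[OF \<mu> RB DP \<rho>'])
  also have "measure_pmf.expectation \<rho> W = (\<Sum>v\<in>set_pmf \<rho>'. pmf \<rho>' v * measure_pmf.expectation (K v) W)"
    unfolding \<rho>_def using \<rho>'(1) K_fin by (subst pmf_expectation_bind) auto
  also have "\<dots> = (\<Sum>v\<in>set_pmf \<rho>'. pmf \<rho>' v * W v)
                   + pmf \<rho>' x * ((1 - t) * W y + t * W z - W x)"
  proof -
    have E_K: "measure_pmf.expectation (K v) W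
                = W v + of_bool (v = x) * ((1 - t) * W y + t * W z - W x)" for v
      using t by (simp add: K_def split_def)
    show ?thesis
      unfolding E_K using x \<rho>'(1)
      by (simp add: distrib_left sum.distrib mult.left_commute[of "pmf \<rho>' _"] Int_absorb1)
  qed
  also have "(\<Sum>v\<in>set_pmf \<rho>'. pmf \<rho>' v * W v) = measure_pmf.expectation \<rho>' W"
    using \<rho>'(1) by (simp add: expectation_finite_pmf)
  finally have "0 \<le> pmf \<rho>' x * ((1 - t) * W y + t * W z - W x)"
    by simp
  moreover have "0 < pmf \<rho>' x"
    using x by (simp add: pmf_positive)
  ultimately show ?thesis
    unfolding W_def by (simp add: zero_le_mult_iff)
qed

lemma ex_posterior_distribution_through:
  assumes \<mu>: "\<mu> \<in> rel_interior belief_simplex" and x: "x \<in> belief_simplex"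
  obtains \<rho> where "finite (set_pmf \<rho>)" "set_pmf \<rho> \<subseteq> belief_simplex" "mean_pmf \<rho> = \<mu>"
    "x \<in> set_pmf \<rho>"
proof -
  obtain e where e: "1 < e" and beyond: "(1 - e) *\<^sub>R x + e *\<^sub>R \<mu> \<in> belief_simplex"
    using \<mu> x convex_rel_interior_iff[OF convex_belief_simplex] by blast
  define w where "w = (1 - e) *\<^sub>R x + e *\<^sub>R \<mu>"
  define p where "p = 1 - 1 / e"
  have p: "0 < p" "p < 1"
    using e by (auto simp: p_def)
  define \<rho> where "\<rho> = map_pmf (\<lambda>b. if b then x else w) (bernoulli_pmf p)"
  have "set_pmf \<rho> = {x, w}"
    using p by (auto simp: \<rho>_def)
  moreover have "mean_pmf \<rho> = p *\<^sub>R x + (1 - p) *\<^sub>R w"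
    using p by (simp add: \<rho>_def mean_pmf_def expectation_bernoulli_pmf)
  moreover have "p *\<^sub>R x + (1 - p) *\<^sub>R w = \<mu>"
    using e by (simp add: p_def w_def algebra_simps)
  ultimately show ?thesis
    using that[of \<rho>] x beyond by (simp add: w_def)
qed

lemma respects_blackwell_convex_on:
  fixes \<mu> :: "real ^ 'n::finite" and A :: "(real ^ 'n) set"
  assumes \<mu>: "\<mu> \<in> rel_interior belief_simplex" and RB: "respects_blackwell \<mu> \<phi>"
    and DP: "decision_problem A u astar"
  shows "convex_on belief_simplex (distorted_value \<phi> u astar)"
proof (rule convex_onI[OF _ convex_belief_simplex])
  fix t :: real and y z :: "real ^ 'n"
  assume t: "0 < t" "t < 1" and yz: "y \<in> belief_simplex" "z \<in> belief_simplex"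
  have "(1 - t) *\<^sub>R y + t *\<^sub>R z \<in> belief_simplex"
    using t yz by (intro convexD[OF convex_belief_simplex]) auto
  then obtain \<rho> where "finite (set_pmf \<rho>)" "set_pmf \<rho> \<subseteq> belief_simplex" "mean_pmf \<rho> = \<mu>"
    "(1 - t) *\<^sub>R y + t *\<^sub>R z \<in> set_pmf \<rho>"
    using ex_posterior_distribution_through[OF \<mu>] by blast
  then show "distorted_value \<phi> u astar ((1 - t) *\<^sub>R y + t *\<^sub>R z)
               \<le> (1 - t) * distorted_value \<phi> u astar y + t * distorted_value \<phi> u astar z"
    using distorted_value_split[OF \<mu> RB DP] yz t by simp
qed

lemma respects_blackwell_convex_on_bet:
  fixes \<mu> c :: "real ^ 'n::finite"
  assumes \<mu>: "\<mu> \<in> rel_interior belief_simplex" and RB: "respects_blackwell \<mu> \<phi>"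
  shows "convex_on belief_simplex (\<lambda>x. if 0 \<le> c \<bullet> \<phi> x then c \<bullet> x else 0)"
proof -
  define u :: "real ^ 'n \<Rightarrow> 'n \<Rightarrow> real" where "u a \<theta> = a $ \<theta> * c $ \<theta>" for a \<theta>
  define astar :: "real ^ 'n \<Rightarrow> real ^ 'n" where "astar y = (if 0 \<le> c \<bullet> y then 1 else 0)" for y
  have exp_util_bet: "exp_util y u 1 = c \<bullet> y" "exp_util y u 0 = 0" for y
    by (simp_all add: exp_util_def u_def inner_vec_def mult.commute)
  have "decision_problem {0, 1} u astar"
    unfolding decision_problem_def consistent_choice_def
    by (auto simp: u_def astar_def exp_util_bet intro!: continuous_intros)
  moreover have "distorted_value \<phi> u astar = (\<lambda>x. if 0 \<le> c \<bullet> \<phi> x then c \<bullet> x else 0)"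
    by (auto simp: distorted_value_def astar_def exp_util_bet)
  ultimately show ?thesis
    using respects_blackwell_convex_on[OF \<mu> RB] by metis
qed

lemma ex_inner_eq_noncollinear:
  fixes u v :: "'a::real_inner"
  assumes "\<not> collinear {0, u, v}"
  obtains c where "c \<bullet> u = \<alpha>" "c \<bullet> v = \<beta>"
proof -
  have u: "u \<noteq> 0" and v: "\<forall>k. v \<noteq> k *\<^sub>R u"
    using assms by (auto simp: collinear_lemma)
  define v' where "v' = v - ((u \<bullet> v) / (u \<bullet> u)) *\<^sub>R u"
  have "v' \<noteq> 0"
    using v by (auto simp: v'_def)
  have v'_u: "v' \<bullet> u = 0"
    using u by (simp add: v'_def inner_diff_left inner_commute[of v u])
  have v'_v: "v' \<bullet> v = v' \<bullet> v'"
    using v'_u by (simp add: v'_def inner_diff_right inner_commute)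
  define c where "c = (\<alpha> / (u \<bullet> u)) *\<^sub>R u + ((\<beta> - \<alpha> * (u \<bullet> v) / (u \<bullet> u)) / (v' \<bullet> v')) *\<^sub>R v'"
  show ?thesis
  proof (rule that)
    show "c \<bullet> u = \<alpha>"
      using u v'_u by (simp add: c_def inner_add_left)
    show "c \<bullet> v = \<beta>"
      using u \<open>v' \<noteq> 0\<close> by (simp add: c_def inner_add_left v'_v)
  qed
qed

lemma ex_inner_signs_noncollinear:
  fixes \<mu> x y :: "real ^ 'n::finite"
  assumes nc: "\<not> collinear {\<mu>, x, y}"
    and simplex: "\<mu> \<in> belief_simplex" "x \<in> belief_simplex" "y \<in> belief_simplex"
    and t: "0 < t" and s: "0 \<le> s" "s < 1"
  obtains c where "0 < c \<bullet> x" "c \<bullet> ((1 - t) *\<^sub>R x + t *\<^sub>R \<mu>) < 0"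
    "0 < c \<bullet> y" "0 \<le> c \<bullet> ((1 - s) *\<^sub>R y + s *\<^sub>R \<mu>)"
proof -
  have "\<not> collinear {0, x - \<mu>, y - \<mu>}"
    using nc collinear_3[of x \<mu> y] by (simp add: insert_commute)
  then obtain c0 where c0: "c0 \<bullet> (x - \<mu>) = 1" "c0 \<bullet> (y - \<mu>) = 1 / (1 - s)"
    by (rule ex_inner_eq_noncollinear)
  define c where "c = c0 - (c0 \<bullet> \<mu> + 1 - t / 2) *\<^sub>R 1"
  have c: "c \<bullet> (\<mu> + a *\<^sub>R (z - \<mu>)) = a * (c0 \<bullet> (z - \<mu>)) + t / 2 - 1" if "z \<in> belief_simplex" for z a
    using that simplex(1)
    by (simp add: c_def inner_one_belief_simplex inner_diff_left inner_diff_right inner_add_right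
        algebra_simps)
  show ?thesis
  proof (rule that)
    show "0 < c \<bullet> x"
      using c[OF simplex(2), of 1] c0 t by simp
    have "(1 - t) *\<^sub>R x + t *\<^sub>R \<mu> = \<mu> + (1 - t) *\<^sub>R (x - \<mu>)"
      by (simp add: algebra_simps)
    then show "c \<bullet> ((1 - t) *\<^sub>R x + t *\<^sub>R \<mu>) < 0"
      using c[OF simplex(2), of "1 - t"] c0 t by simp
    have "1 \<le> 1 / (1 - s)"
      using s by simp
    then show "0 < c \<bullet> y"
      using c[OF simplex(3), of 1] c0 t by simp
    have "(1 - s) *\<^sub>R y + s *\<^sub>R \<mu> = \<mu> + (1 - s) *\<^sub>R (y - \<mu>)"
      by (simp add: algebra_simps)
    then show "0 \<le> c \<bullet> ((1 - s) *\<^sub>R y + s *\<^sub>R \<mu>)"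
      using c[OF simplex(3), of "1 - s"] c0 t s by simp
  qed
qed

lemma stubborn_at_noncollinear:
  fixes \<mu> :: "real ^ 'n::finite"
  assumes \<mu>: "\<mu> \<in> rel_interior belief_simplex" and RB: "respects_blackwell \<mu> \<phi>"
    and no_expansive: "\<forall>x\<in>belief_simplex. \<phi> x \<in> closed_segment x \<mu>"
    and F: "convex F" "F \<subseteq> belief_simplex" and x0: "x0 \<in> F" "\<phi> x0 \<noteq> x0"
    and y: "y \<in> rel_interior F" and nc: "\<not> collinear {\<mu>, x0, y}"
  shows "\<phi> y = \<mu>"
proof (rule ccontr)
  assume "\<phi> y \<noteq> \<mu>"
  have "y \<in> F"
    using y rel_interior_subset by blast
  then have simplex: "\<mu> \<in> belief_simplex" "x0 \<in> belief_simplex" "y \<in> belief_simplex"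
    using \<mu> rel_interior_subset F(2) x0(1) by auto
  obtain t where "0 \<le> t" and t: "\<phi> x0 = (1 - t) *\<^sub>R x0 + t *\<^sub>R \<mu>"
    using no_expansive simplex(2) unfolding in_segment by blast
  with x0(2) have "0 < t"
    by (cases "t = 0") auto
  obtain s where s: "0 \<le> s" "s \<le> 1" "\<phi> y = (1 - s) *\<^sub>R y + s *\<^sub>R \<mu>"
    using no_expansive simplex(3) unfolding in_segment by blast
  with \<open>\<phi> y \<noteq> \<mu>\<close> have "s < 1"
    by (cases "s = 1") auto
  obtain c where c: "0 < c \<bullet> x0" "c \<bullet> \<phi> x0 < 0" "0 < c \<bullet> y" "0 \<le> c \<bullet> \<phi> y"
    unfolding t s(3) using ex_inner_signs_noncollinear[OF nc simplex \<open>0 < t\<close> s(1) \<open>s < 1\<close>] .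
  obtain e where e: "1 < e" and beyond: "(1 - e) *\<^sub>R x0 + e *\<^sub>R y \<in> F"
    using y x0(1) convex_rel_interior_iff[OF F(1)] by blast
  define p where "p = (1 - e) *\<^sub>R x0 + e *\<^sub>R y"
  define W where "W x = (if 0 \<le> c \<bullet> \<phi> x then c \<bullet> x else 0)" for x
  have "W ((1 - 1 / e) *\<^sub>R x0 + (1 / e) *\<^sub>R p) \<le> (1 - 1 / e) * W x0 + (1 / e) * W p"
    using convex_onD[OF respects_blackwell_convex_on_bet[OF \<mu> RB, of c], of "1 / e" x0 p]
      e simplex(2) beyond F(2) unfolding W_def p_def by auto
  moreover have "(1 - 1 / e) *\<^sub>R x0 + (1 / e) *\<^sub>R p = y"
    using e by (simp add: p_def algebra_simps)
  ultimately have "W y \<le> (1 - 1 / e) * W x0 + (1 / e) * W p"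
    by simp
  then have "c \<bullet> y \<le> W p / e"
    using c by (simp add: W_def)
  moreover have "W p / e < c \<bullet> y"
  proof (cases "0 \<le> c \<bullet> \<phi> p")
    case True
    have "c \<bullet> p / e = c \<bullet> y - (1 - 1 / e) * (c \<bullet> x0)"
      using e by (simp add: p_def inner_add_right inner_diff_right field_simps)
    moreover have "0 < (1 - 1 / e) * (c \<bullet> x0)"
      using e c(1) by simp
    ultimately show ?thesis
      using True by (simp add: W_def)
  qed (use c(3) in \<open>simp add: W_def\<close>)
  ultimately show False
    by simp
qed

lemma not_collinear_belief_simplex:
  assumes "CARD('n::finite) \<ge> 3"
  shows "\<not> collinear (belief_simplex :: (real ^ 'n) set)"
proof
  assume coll: "collinear (belief_simplex :: (real ^ 'n) set)"
  obtain T :: "'n set" where "card T = 3"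
    using obtain_subset_with_card_n[OF assms] by blast
  then obtain i j k :: 'n where ijk: "i \<noteq> j" "j \<noteq> k" "i \<noteq> k"
    unfolding card_3_iff by blast
  have "collinear {axis i 1, axis j 1, axis k 1 :: real ^ 'n}"
    by (rule collinear_subset[OF coll]) (simp add: axis_in_belief_simplex)
  moreover have "axis i 1 \<noteq> (axis k 1 :: real ^ 'n)"
    using ijk by (simp add: axis_eq_axis)
  ultimately obtain u where "axis j 1 = u *\<^sub>R axis i 1 + (1 - u) *\<^sub>R (axis k 1 :: real ^ 'n)"
    unfolding collinear_3_expand by blast
  from arg_cong[OF this, of "\<lambda>v. v $ i"] arg_cong[OF this, of "\<lambda>v. v $ k"] show False
    using ijk by (simp add: axis_def)
qed

lemma ex_noncollinear_rel_interior_face: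
  fixes \<mu> :: "real ^ 'n::finite"
  assumes card: "CARD('n) \<ge> 3" and \<mu>: "\<mu> \<in> rel_interior belief_simplex"
    and F: "F face_of belief_simplex" "1 \<le> aff_dim F" and x0: "x0 \<noteq> \<mu>"
  obtains y where "y \<in> rel_interior F" "\<not> collinear {\<mu>, x0, y}"
proof -
  have "\<exists>y\<in>rel_interior F. \<not> collinear {\<mu>, x0, y}"
  proof (rule ccontr)
    assume "\<not> ?thesis"
    then have "rel_interior F \<subseteq> affine hull {\<mu>, x0}"
      using collinear_3_affine_hull[of \<mu> x0] x0 by auto
    then have "affine hull (rel_interior F) \<subseteq> affine hull {\<mu>, x0}"
      by (intro hull_minimal affine_affine_hull)
    then have sub: "affine hull F \<subseteq> affine hull {\<mu>, x0}"
      by (simp add: rel_interior_same_affine_hull[OF face_of_imp_convex[OF F(1)]])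
    moreover have "aff_dim (affine hull {\<mu>, x0}) \<le> aff_dim (affine hull F)"
      using F(2) x0 by simp
    then have "aff_dim (affine hull F) = aff_dim (affine hull {\<mu>, x0})"
      using aff_dim_subset[OF sub] by linarith
    moreover have "F \<noteq> {}"
      using F(2) by (cases "F = {}") simp_all
    ultimately have "affine hull F = affine hull {\<mu>, x0}"
      by (intro affine_dim_equal) auto
    then have "\<mu> \<in> affine hull F"
      by (simp add: hull_inc)
    with \<mu> have "F = belief_simplex"
      using affine_hull_face_of_disjoint_rel_interior[OF convex_belief_simplex F(1)] by auto
    then have "belief_simplex \<subseteq> affine hull {\<mu>, x0}"
      using sub hull_subset[of F] by blast
    then have "collinear (belief_simplex :: (real ^ 'n) set)"
      by (rule collinear_subset[rotated]) (simp add: collinear_affine_hull_collinear)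
    then show False
      using not_collinear_belief_simplex[OF card] by blast
  qed
  then show ?thesis
    using that by blast
qed

lemma stubborn_on_rel_interior_face:
  fixes \<mu> :: "real ^ 'n::finite"
  assumes card: "CARD('n) \<ge> 3" and \<mu>: "\<mu> \<in> rel_interior belief_simplex"
    and RB: "respects_blackwell \<mu> \<phi>"
    and no_expansive: "\<forall>x\<in>belief_simplex. \<phi> x \<in> closed_segment x \<mu>"
    and F: "F face_of belief_simplex" "1 \<le> aff_dim F" and x0: "x0 \<in> F" "\<phi> x0 \<noteq> x0"
    and y: "y \<in> rel_interior F"
  shows "\<phi> y = \<mu>"
proof -
  note stubborn = stubborn_at_noncollinear[OF \<mu> RB no_expansive face_of_imp_convex[OF F(1)]
      face_of_imp_subset[OF F(1)]]
  have "\<phi> \<mu> = \<mu>"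
    using no_expansive \<mu> rel_interior_subset by fastforce
  with x0(2) have "x0 \<noteq> \<mu>"
    by blast
  then obtain y1 where y1: "y1 \<in> rel_interior F" "\<not> collinear {\<mu>, x0, y1}"
    using ex_noncollinear_rel_interior_face[OF card \<mu> F] by blast
  then have "y1 \<noteq> \<mu>"
    by (auto simp: insert_commute)
  have "\<phi> y1 = \<mu>"
    using stubborn[OF x0 y1] .
  consider "y = \<mu>" | "\<not> collinear {\<mu>, x0, y}" | "collinear {\<mu>, x0, y}" "y \<noteq> \<mu>"
    by blast
  then show ?thesis
  proof cases
    case 1
    then show ?thesis
      using \<open>\<phi> \<mu> = \<mu>\<close> by simp
  next
    case 2
    then show ?thesis
      by (rule stubborn[OF x0 y])
  next
    case 3
    have "\<not> collinear {\<mu>, y1, y}"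
    proof
      assume "collinear {\<mu>, y1, y}"
      then have "collinear {\<mu>, y, y1}"
        by (simp add: insert_commute)
      with 3 have "collinear {x0, \<mu>, y1}"
        by (intro collinear_3_trans[of x0 \<mu> y y1]) (auto simp: insert_commute)
      with y1(2) show False
        by (simp add: insert_commute)
    qed
    moreover have "y1 \<in> F" "\<phi> y1 \<noteq> y1"
      using y1(1) rel_interior_subset \<open>\<phi> y1 = \<mu>\<close> \<open>y1 \<noteq> \<mu>\<close> by auto
    ultimately show ?thesis
      using stubborn[OF _ _ y] by blast
  qed
qed

theorem proposition2:
  fixes \<mu> :: "real ^ 'n::finite"
    and \<phi> :: "real ^ 'n \<Rightarrow> real ^ 'n"
  assumes "CARD('n) \<ge> 3"
    and "\<mu> \<in> rel_interior belief_simplex"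
    and "\<forall>x\<in>belief_simplex. \<phi> x \<in> belief_simplex"
    and "respects_blackwell \<mu> \<phi>"
    and "produces_contractive_error \<mu> \<phi>"
    and "\<not> produces_expansive_error \<mu> \<phi>"
  shows "occasionally_stubborn \<phi>"
proof -
  have no_expansive: "\<forall>x\<in>belief_simplex. \<phi> x \<in> closed_segment x \<mu>"
    using assms(6) by (simp add: produces_expansive_error_def expansive_error_at_def)
  have stubborn: "\<forall>S\<in>S_hat \<phi>. 1 \<le> aff_dim S \<longrightarrow> (\<forall>x\<in>rel_interior S. \<phi> x = \<mu>)"
    using stubborn_on_rel_interior_face[OF assms(1,2,4) no_expansive] by (auto simp: S_hat_def)
  have vertices: "\<forall>e\<in>E_hat \<phi>. \<phi> e \<in> closed_segment \<mu> e"
    using no_expansive by (auto simp: E_hat_def extreme_point_of_def closed_segment_commute)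
  have "\<mu> \<in> belief_simplex"
    using assms(2) rel_interior_subset by blast
  then show ?thesis
    unfolding occasionally_stubborn_def
    by (intro disjI2 bexI[of _ \<mu>] conjI) (use stubborn vertices in auto)
qed

end
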